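(* Let $(\Omega,\mathcal{F},\mathbb{P})$ be a complete probability space and $X=\{X_t\}_{t\geq0}$ a real-valued stochastic process with almost surely continuous paths such that $X_t$ has a density (with respect to Lebesgue measure) for every $t\in(0,\infty)$. Let $AP$ be a set of atomic formulas, each $a\in AP$ interpreted by a Borel set $B_a\subset\mathbb{R}$ whose boundary $\partial B_a$ has Lebesgue measure zero. Then for every MTL-formula $\phi$ there exists $K\in\mathcal{F}\otimes\mathcal{B}([0,\infty))$ such that (i) $\{t : (\omega,t)\in K\}$ is almost surely closed; (ii) $\{t : (\omega,t)\in K\}$ has Lebesgue measure zero almost surely; (iii) $\mathbb{P}(\{\omega : (\omega,t)\in K\})=0$ for every $t\in(0,\infty)$; (iv) $\partial\llbracket\phi\rrbracket_\omega\subset\{t : (\omega,t)\in K\}$.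
   Context: MTL-formulas are built from atomic formulas by $\lnot$, $\wedge$, and until operators $\mathcal{U}_I$ ($I$ an interval in $[0,\infty)$), with $\Diamond_I\phi:=\top\,\mathcal{U}_I\phi$ meaning $\exists s\in I$: $X(\omega),t+s\models\phi$; $X(\omega),t\models a$ iff $X_t(\omega)\in B_a$. $\llbracket\phi\rrbracket_\omega:=\{t\geq0 : X(\omega),t\models\phi\}$, and $\partial$ denotes the boundary in $[0,\infty)$. *)

theory Defs
  imports "HOL-Probability.Probability"
begin

datatype 'a mtl =
    MTrue
  | Atom 'a
  | Neg "'a mtl"
  | Conj "'a mtl" "'a mtl"
  | Until "'a mtl" "real set" "'a mtl"

fun wf_mtl :: "'a mtl \<Rightarrow> bool" where
  "wf_mtl MTrue = True"
| "wf_mtl (Atom a) = True"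
| "wf_mtl (Neg \<phi>) = wf_mtl \<phi>"
| "wf_mtl (Conj \<phi> \<psi>) = (wf_mtl \<phi> \<and> wf_mtl \<psi>)"
| "wf_mtl (Until \<phi> I \<psi>) = (is_interval I \<and> I \<subseteq> {0..} \<and> wf_mtl \<phi> \<and> wf_mtl \<psi>)"

fun sat :: "('a \<Rightarrow> real set) \<Rightarrow> (real \<Rightarrow> real) \<Rightarrow> 'a mtl \<Rightarrow> real \<Rightarrow> bool" where
  "sat B x MTrue t = True"
| "sat B x (Atom a) t = (x t \<in> B a)"
| "sat B x (Neg \<phi>) t = (\<not> sat B x \<phi> t)"
| "sat B x (Conj \<phi> \<psi>) t = (sat B x \<phi> t \<and> sat B x \<psi> t)"
| "sat B x (Until \<phi> I \<psi>) t =
     (\<exists>s\<in>I. sat B x \<psi> (t + s) \<and> (\<forall>s'\<in>{0..<s}. sat B x \<phi> (t + s')))"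

definition sem :: "('a \<Rightarrow> real set) \<Rightarrow> (real \<Rightarrow> 'w \<Rightarrow> real) \<Rightarrow> 'a mtl \<Rightarrow> 'w \<Rightarrow> real set" where
  "sem B X \<phi> \<omega> = {t. t \<ge> 0 \<and> sat B (\<lambda>s. X s \<omega>) \<phi> t}"

end

theory Submission
  imports Defs
begin

text \<open>Along a continuous path \<open>x\<close>, the frontier of the satisfaction set of \<open>\<phi>\<close> is contained in
  the set of \<^emph>\<open>critical times\<close>: times \<open>t\<close> with \<open>x (t + c) \<in> frontier (B a)\<close> for some atom \<open>a\<close>
  and some shift \<open>c\<close> from a finite set determined by \<open>\<phi>\<close>. Atoms, negation and conjunction are
  immediate; for \<open>Until \<phi> I \<psi>\<close> the satisfaction set is locally constant at \<open>t\<close> as soon as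
  the sets of \<open>\<phi>\<close> and \<open>\<psi>\<close> are locally constant at \<open>t\<close>, \<open>t + Inf I\<close> and \<open>t + Sup I\<close>,
  because a witness near an endpoint of \<open>I\<close> can be moved across it.

  So \<open>K\<close> is taken to be the set of critical times of the continuous paths, together with all
  times for the null set of discontinuous paths. Its sections are closed by continuity, and
  \<open>K\<close> is jointly measurable because a process with continuous paths is. For fixed \<open>t > 0\<close>,
  each \<open>X (t + c)\<close> has a density and \<open>frontier (B a)\<close> is Lebesgue-null, so the \<open>t\<close>-section
  of \<open>K\<close> is null; by Fubini almost every \<open>\<omega>\<close>-section is null as well.\<close>

section \<open>Local constancy of membership\<close>

definition const_on_ball :: "'a::metric_space set \<Rightarrow> 'a \<Rightarrow> real \<Rightarrow> bool" where
  "const_on_ball S x e \<longleftrightarrow> (\<forall>y\<in>ball x e. y \<in> S \<longleftrightarrow> x \<in> S)"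

lemma not_in_frontier_iff_const_on_ball:
  "x \<notin> frontier S \<longleftrightarrow> (\<exists>e>0. const_on_ball S x e)"
  unfolding frontier_straddle const_on_ball_def
  by (metis centre_in_ball mem_ball)

lemma const_on_ball_subset:
  "const_on_ball S x e \<Longrightarrow> ball y r \<subseteq> ball x e \<Longrightarrow> const_on_ball S y r"
  unfolding const_on_ball_def by (metis centre_in_ball empty_iff ball_eq_empty not_le subsetD)

lemma const_on_ball_subsetI:
  "const_on_ball S x e \<Longrightarrow> y \<in> ball x e \<Longrightarrow> y \<in> S \<Longrightarrow> ball x e \<subseteq> S"
  unfolding const_on_ball_def by blast

lemma eventually_const_on_ball:
  assumes "x \<notin> frontier S"
  shows "eventually (const_on_ball S x) (at_right 0)"
proof -
  obtain e where "e > 0" "const_on_ball S x e"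
    using assms not_in_frontier_iff_const_on_ball by blast
  then show ?thesis
    unfolding eventually_at_right_field
    by (intro exI[of _ e]) (auto intro: const_on_ball_subset)
qed

lemma const_on_ball_translate:
  fixes t :: "'a::real_normed_vector"
  shows "const_on_ball {y. t + y \<in> S} x e \<longleftrightarrow> const_on_ball S (t + x) e"
proof
  assume H: "const_on_ball {y. t + y \<in> S} x e"
  show "const_on_ball S (t + x) e"
    unfolding const_on_ball_def
  proof
    fix z assume "z \<in> ball (t + x) e"
    then have "z - t \<in> ball x e"
      by (simp add: dist_norm algebra_simps)
    with H show "z \<in> S \<longleftrightarrow> t + x \<in> S"
      unfolding const_on_ball_def by fastforce
  qed
qed (auto simp: const_on_ball_def dist_norm)

lemma frontier_vimage_subset:
  assumes "continuous_on UNIV f"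
  shows "frontier (f -` S) \<subseteq> f -` frontier S"
proof
  fix t assume t: "t \<in> frontier (f -` S)"
  have "f ` closure (f -` S) \<subseteq> closure S"
    using continuous_on_subset[OF assms subset_UNIV] closure_subset[of S]
    by (intro image_closure_subset) auto
  then have "f t \<in> closure S"
    using t by (auto simp: frontier_def)
  moreover have "f -` interior S \<subseteq> interior (f -` S)"
    by (intro interior_maximal vimage_mono interior_subset open_vimage open_interior assms)
  ultimately show "t \<in> f -` frontier S"
    using t by (auto simp: frontier_def)
qed

section \<open>The until operator\<close>

definition until_set :: "real set \<Rightarrow> real set \<Rightarrow> real set \<Rightarrow> real set" where
  "until_set P I Q = {t. \<exists>s\<in>I. t + s \<in> Q \<and> (\<forall>s'\<in>{0..<s}. t + s' \<in> P)}"

lemma mem_until_set_iff: "t \<in> until_set P I Q \<longleftrightarrow> (\<exists>s\<in>I. t + s \<in> Q \<and> {t..<t + s} \<subseteq> P)"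
proof -
  have "(\<forall>s'\<in>{0..<s}. t + s' \<in> P) \<longleftrightarrow> {t..<t + s} \<subseteq> P" for s
  proof
    assume P: "\<forall>s'\<in>{0..<s}. t + s' \<in> P"
    show "{t..<t + s} \<subseteq> P"
    proof
      fix q assume "q \<in> {t..<t + s}"
      then have "q - t \<in> {0..<s}" by auto
      with P show "q \<in> P" by fastforce
    qed
  qed auto
  then show ?thesis
    unfolding until_set_def by blast
qed

lemma until_set_translate:
  "{y. t + y \<in> until_set P I Q} = until_set {y. t + y \<in> P} I {y. t + y \<in> Q}"
  unfolding until_set_def by (simp add: add.assoc)

lemma interval_shift_meets_imp_meets:
  fixes I W :: "real set"
  assumes I: "is_interval I" "bdd_below I"
    and W_Inf: "const_on_ball W (Inf I) e"
    and W_Sup: "bdd_above I \<Longrightarrow> const_on_ball W (Sup I) e"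
    and h: "\<bar>h\<bar> < e" and s: "s \<in> I" "h + s \<in> W"
  shows "\<exists>s\<in>I. s \<in> W"
proof (cases "h + s \<in> I")
  case True
  with s show ?thesis by blast
next
  case False
  have "I \<noteq> {}" using s by auto
  have "h \<noteq> 0" using False s by auto
  then consider "h < 0" | "h > 0" by linarith
  then show ?thesis
  proof cases
    case 1
    have below: "h + s < y" if "y \<in> I" for y
      using mem_is_interval_1_I[OF I(1) that s(1), of "h + s"] False 1 by fastforce
    then have "h + s \<le> Inf I"
      using \<open>I \<noteq> {}\<close> by (intro cInf_greatest) (auto intro: less_imp_le)
    moreover have "Inf I \<le> s"
      using s(1) I(2) by (rule cInf_lower)
    ultimately have "h + s \<in> ball (Inf I) e"
      using h 1 by (simp add: dist_real_def)
    then have W: "ball (Inf I) e \<subseteq> W"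
      using const_on_ball_subsetI[OF W_Inf _ s(2)] by blast
    have "Inf I < Inf I + e"
      using h by linarith
    then obtain s' where s': "s' \<in> I" "s' < Inf I + e"
      using cInf_less_iff[OF \<open>I \<noteq> {}\<close> I(2)] by blast
    moreover have "Inf I \<le> s'"
      using s'(1) I(2) by (rule cInf_lower)
    ultimately show ?thesis
      using W by (force simp: dist_real_def)
  next
    case 2
    have above: "y < h + s" if "y \<in> I" for y
      using mem_is_interval_1_I[OF I(1) s(1) that, of "h + s"] False 2 by fastforce
    then have bdd: "bdd_above I"
      by (meson bdd_aboveI less_imp_le)
    have "Sup I \<le> h + s"
      using above \<open>I \<noteq> {}\<close> by (intro cSup_least) (auto intro: less_imp_le)
    moreover have "s \<le> Sup I"
      using s(1) bdd by (rule cSup_upper)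
    ultimately have "h + s \<in> ball (Sup I) e"
      using h 2 by (simp add: dist_real_def)
    then have W: "ball (Sup I) e \<subseteq> W"
      using const_on_ball_subsetI[OF W_Sup[OF bdd] _ s(2)] by blast
    have "Sup I - e < Sup I"
      using h by linarith
    then obtain s' where s': "s' \<in> I" "Sup I - e < s'"
      using less_cSup_iff[OF \<open>I \<noteq> {}\<close> bdd] by blast
    moreover have "s' \<le> Sup I"
      using s'(1) bdd by (rule cSup_upper)
    ultimately show ?thesis
      using W by (force simp: dist_real_def)
  qed
qed

lemma const_on_ball_until_witnesses:
  fixes P Q :: "real set"
  assumes "0 \<in> P" and P: "const_on_ball P c e" and Q: "const_on_ball Q c e"
  shows "const_on_ball {p. p \<in> Q \<and> {0..<p} \<subseteq> P} c e"
proof -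
  let ?W = "{p. p \<in> Q \<and> {0..<p} \<subseteq> P}"
  have step: "p' \<in> ?W" if p: "p \<in> ?W" "p \<in> ball c e" and p': "p' \<in> ball c e" for p p'
  proof -
    have "p' \<in> Q"
      using Q p p' unfolding const_on_ball_def by blast
    moreover have "q \<in> P" if q: "0 \<le> q" "q < p'" for q
    proof (cases "q < p")
      case True
      then show ?thesis using p(1) q by auto
    next
      case False
      then have q_ball: "q \<in> ball c e"
        using p(2) p' q by (auto simp: dist_real_def)
      have "ball c e \<inter> insert 0 {0..<p} \<noteq> {}"
      proof (cases "p \<le> 0")
        case True
        then have "0 \<in> ball c e"
          using p(2) q_ball q(1) by (auto simp: dist_real_def)
        then show ?thesis by blast
      next
        case False
        then have "p \<in> ball c e \<inter> closure {0..<p}"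
          using p(2) by simp
        then show ?thesis
          using open_Int_closure_eq_empty[of "ball c e" "{0..<p}"] by auto
      qed
      moreover have "insert 0 {0..<p} \<subseteq> P"
        using \<open>0 \<in> P\<close> p(1) by auto
      ultimately have "ball c e \<subseteq> P"
        using const_on_ball_subsetI[OF P] by blast
      then show ?thesis
        using q_ball by blast
    qed
    ultimately show ?thesis
      by auto
  qed
  show ?thesis
    unfolding const_on_ball_def
  proof
    fix y assume "y \<in> ball c e"
    moreover from this have "c \<in> ball c e"
      by (metis centre_in_ball ball_eq_empty empty_iff not_le)
    ultimately show "y \<in> ?W \<longleftrightarrow> c \<in> ?W"
      using step by blast
  qed
qed

lemma const_on_ball_until_set:
  fixes P I Q :: "real set"
  assumes I: "is_interval I" "I \<subseteq> {0..}"
    and P0: "const_on_ball P 0 e" and Q0: "const_on_ball Q 0 e"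
    and PQ_Inf: "const_on_ball P (Inf I) e" "const_on_ball Q (Inf I) e"
    and PQ_Sup: "bdd_above I \<Longrightarrow> const_on_ball P (Sup I) e"
      "bdd_above I \<Longrightarrow> const_on_ball Q (Sup I) e"
  shows "const_on_ball (until_set P I Q) 0 (e / 2)"
proof (cases "0 \<in> P")
  case False
  have key: "h \<in> until_set P I Q \<longleftrightarrow> 0 \<in> I \<and> h \<in> Q" if "h \<in> ball 0 e" for h
  proof -
    have "h \<notin> P"
      using P0 False that unfolding const_on_ball_def by blast
    have "{h..<h + s} \<subseteq> P \<longleftrightarrow> s \<le> 0" for s
    proof (cases "0 < s")
      case True
      then have "h \<in> {h..<h + s}" by simp
      with \<open>h \<notin> P\<close> True show ?thesis by (meson not_less subsetD)
    qed simp
    then have "h \<in> until_set P I Q \<longleftrightarrow> (\<exists>s\<in>I. s \<le> 0 \<and> h + s \<in> Q)"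
      by (auto simp: mem_until_set_iff)
    also have "\<dots> \<longleftrightarrow> 0 \<in> I \<and> h \<in> Q"
    proof
      assume "\<exists>s\<in>I. s \<le> 0 \<and> h + s \<in> Q"
      then obtain s where s: "s \<in> I" "s \<le> 0" "h + s \<in> Q" by blast
      moreover have "0 \<le> s" using subsetD[OF I(2) s(1)] by simp
      ultimately show "0 \<in> I \<and> h \<in> Q" by simp
    qed auto
    finally show ?thesis .
  qed
  show ?thesis
    unfolding const_on_ball_def
  proof
    fix y :: real assume "y \<in> ball 0 (e / 2)"
    then have "y \<in> ball 0 e" "0 \<in> ball 0 e"
      by (auto simp: dist_real_def)
    then show "y \<in> until_set P I Q \<longleftrightarrow> 0 \<in> until_set P I Q"
      using key Q0 unfolding const_on_ball_def by blast
  qed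
next
  case True
  define W where "W = {p. p \<in> Q \<and> {0..<p} \<subseteq> P}"
  have "ball 0 e \<subseteq> P"
    using P0 True unfolding const_on_ball_def by blast
  have shift: "h \<in> until_set P I Q \<longleftrightarrow> (\<exists>s\<in>I. h + s \<in> W)" if "h \<in> ball 0 e" for h
  proof -
    have "{h..<p} \<union> ball 0 e = {0..<p} \<union> ball 0 e" for p
      using that by (auto simp: dist_real_def)
    then have "{h..<p} \<subseteq> P \<longleftrightarrow> {0..<p} \<subseteq> P" for p
      using \<open>ball 0 e \<subseteq> P\<close> by (metis Un_subset_iff)
    then show ?thesis
      by (auto simp: mem_until_set_iff W_def)
  qed
  have W_Inf: "const_on_ball W (Inf I) e" and W_Sup: "bdd_above I \<Longrightarrow> const_on_ball W (Sup I) e"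
    unfolding W_def using const_on_ball_until_witnesses[OF True] PQ_Inf PQ_Sup by auto
  have bdd: "bdd_below I"
    using I(2) by (auto intro: bdd_belowI[of _ 0])
  have meets: "(\<exists>s\<in>I. h + s \<in> W) \<longleftrightarrow> (\<exists>s\<in>I. s \<in> W)" if h: "\<bar>h\<bar> < e / 2" for h
  proof
    assume "\<exists>s\<in>I. h + s \<in> W"
    then show "\<exists>s\<in>I. s \<in> W"
      using interval_shift_meets_imp_meets[OF I(1) bdd W_Inf W_Sup, of h] h by fastforce
  next
    \<comment> \<open>The converse is the same statement for the translate of \<open>W\<close> by \<open>-h\<close>, on a ball of half the radius.\<close>
    let ?W = "{p. h + p \<in> W}"
    have ball: "ball (h + c) (e / 2) \<subseteq> ball c e" for c
      using h by (simp add: ball_subset_ball_iff dist_real_def)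
    have "const_on_ball ?W (Inf I) (e / 2)" "bdd_above I \<Longrightarrow> const_on_ball ?W (Sup I) (e / 2)"
      unfolding const_on_ball_translate
      using const_on_ball_subset[OF W_Inf ball] const_on_ball_subset[OF W_Sup ball] by auto
    moreover assume "\<exists>s\<in>I. s \<in> W"
    ultimately show "\<exists>s\<in>I. h + s \<in> W"
      using interval_shift_meets_imp_meets[OF I(1) bdd, of ?W "e / 2" "- h"] h by auto
  qed
  show ?thesis
    unfolding const_on_ball_def
  proof
    fix y :: real assume y: "y \<in> ball 0 (e / 2)"
    then have "y \<in> ball 0 e" "0 \<in> ball 0 e" "\<bar>y\<bar> < e / 2"
      by (auto simp: dist_real_def)
    then show "y \<in> until_set P I Q \<longleftrightarrow> 0 \<in> until_set P I Q"
      using shift[of y] shift[of 0] meets[of y] by simp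
  qed
qed

lemma frontier_until_set_subset:
  fixes P I Q :: "real set"
  assumes I: "is_interval I" "I \<subseteq> {0..}"
    and C: "finite C" "0 \<in> C" "Inf I \<in> C" "bdd_above I \<Longrightarrow> Sup I \<in> C"
  shows "frontier (until_set P I Q) \<subseteq> {t. \<exists>c\<in>C. t + c \<in> frontier P \<union> frontier Q}"
proof
  fix t assume t: "t \<in> frontier (until_set P I Q)"
  show "t \<in> {t. \<exists>c\<in>C. t + c \<in> frontier P \<union> frontier Q}"
  proof (rule ccontr)
    assume "t \<notin> {t. \<exists>c\<in>C. t + c \<in> frontier P \<union> frontier Q}"
    then have "\<forall>c\<in>C. t + c \<notin> frontier P \<and> t + c \<notin> frontier Q"
      by auto
    then have "\<forall>\<^sub>F e in at_right 0. \<forall>c\<in>C. const_on_ball P (t + c) e \<and> const_on_ball Q (t + c) e"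
      using C(1) by (simp add: eventually_ball_finite_distrib eventually_conj_iff eventually_const_on_ball)
    moreover have "\<forall>\<^sub>F e in at_right 0. (0::real) < e"
      by (rule eventually_at_right_less)
    ultimately obtain e :: real where e: "0 < e" "\<forall>c\<in>C. const_on_ball P (t + c) e \<and> const_on_ball Q (t + c) e"
      using eventually_happens'[OF trivial_limit_at_right_real eventually_conj] by blast
    have "const_on_ball (until_set {y. t + y \<in> P} I {y. t + y \<in> Q}) 0 (e / 2)"
      by (rule const_on_ball_until_set[OF I]) (use e(2) C in \<open>auto simp: const_on_ball_translate\<close>)
    then have "const_on_ball (until_set P I Q) t (e / 2)"
      by (simp add: until_set_translate[symmetric] const_on_ball_translate)
    then have "t \<notin> frontier (until_set P I Q)"
      using e(1) not_in_frontier_iff_const_on_ball half_gt_zero by blast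
    then show False
      using t by blast
  qed
qed

section \<open>Frontiers of satisfaction sets\<close>

(* max 0 keeps all shifts nonnegative despite the unspecified values of Inf and Sup
   for empty or unbounded I. *)
fun atom_shifts :: "'a mtl \<Rightarrow> ('a \<times> real) set" where
  "atom_shifts MTrue = {}"
| "atom_shifts (Atom a) = {(a, 0)}"
| "atom_shifts (Neg \<phi>) = atom_shifts \<phi>"
| "atom_shifts (Conj \<phi> \<psi>) = atom_shifts \<phi> \<union> atom_shifts \<psi>"
| "atom_shifts (Until \<phi> I \<psi>) =
     (\<Union>c\<in>{0, max 0 (Inf I), max 0 (Sup I)}. (\<lambda>(a, d). (a, d + c)) ` (atom_shifts \<phi> \<union> atom_shifts \<psi>))"

lemma finite_atom_shifts: "finite (atom_shifts \<phi>)"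
  by (induction \<phi>) auto

lemma atom_shifts_nonneg: "(a, c) \<in> atom_shifts \<phi> \<Longrightarrow> 0 \<le> c"
  by (induction \<phi> arbitrary: a c) auto

definition critical_times :: "('a \<Rightarrow> real set) \<Rightarrow> (real \<Rightarrow> real) \<Rightarrow> 'a mtl \<Rightarrow> real set" where
  "critical_times B x \<phi> = {t. \<exists>(a, c)\<in>atom_shifts \<phi>. x (t + c) \<in> frontier (B a)}"

lemma closed_critical_times:
  assumes "continuous_on UNIV x"
  shows "closed (critical_times B x \<phi>)"
proof -
  have "critical_times B x \<phi> = (\<Union>p\<in>atom_shifts \<phi>. (\<lambda>t. x (t + snd p)) -` frontier (B (fst p)))"
    by (auto simp: critical_times_def)
  moreover have "closed ((\<lambda>t. x (t + c)) -` frontier (B a))" for a c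
    by (intro closed_vimage frontier_closed continuous_on_compose2[OF assms] continuous_intros) auto
  ultimately show ?thesis
    by (auto intro!: closed_UN simp: finite_atom_shifts)
qed

lemma critical_times_Until:
  assumes "c \<in> {0, max 0 (Inf I), max 0 (Sup I)}"
    and "t + c \<in> critical_times B x \<phi> \<union> critical_times B x \<psi>"
  shows "t \<in> critical_times B x (Until \<phi> I \<psi>)"
proof -
  obtain a d where ad: "(a, d) \<in> atom_shifts \<phi> \<union> atom_shifts \<psi>" "x (t + c + d) \<in> frontier (B a)"
    using assms(2) unfolding critical_times_def by auto
  have "(a, d + c) \<in> atom_shifts (Until \<phi> I \<psi>)"
    using ad(1) assms(1) by force
  moreover have "x (t + (d + c)) \<in> frontier (B a)"
    using ad(2) by (simp add: ac_simps)
  ultimately show ?thesis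
    unfolding critical_times_def by blast
qed

lemma frontier_sat_subset_critical_times:
  assumes x: "continuous_on UNIV x"
  shows "wf_mtl \<phi> \<Longrightarrow> frontier {t. sat B x \<phi> t} \<subseteq> critical_times B x \<phi>"
proof (induction \<phi>)
  case MTrue
  then show ?case by simp
next
  case (Atom a)
  have "{t. sat B x (Atom a) t} = x -` B a"
    by auto
  then show ?case
    using frontier_vimage_subset[OF x, of "B a"] by (simp add: critical_times_def vimage_def)
next
  case (Neg \<phi>)
  have "{t. sat B x (Neg \<phi>) t} = - {t. sat B x \<phi> t}"
    by auto
  then show ?case
    using Neg by (simp add: critical_times_def)
next
  case (Conj \<phi> \<psi>)
  have "{t. sat B x (Conj \<phi> \<psi>) t} = {t. sat B x \<phi> t} \<inter> {t. sat B x \<psi> t}"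
    by auto
  then have "frontier {t. sat B x (Conj \<phi> \<psi>) t} \<subseteq> frontier {t. sat B x \<phi> t} \<union> frontier {t. sat B x \<psi> t}"
    using frontier_Int_subset by metis
  also have "\<dots> \<subseteq> critical_times B x \<phi> \<union> critical_times B x \<psi>"
    using Conj by auto
  also have "\<dots> = critical_times B x (Conj \<phi> \<psi>)"
    by (auto simp: critical_times_def)
  finally show ?case .
next
  case (Until \<phi> I \<psi>)
  let ?C = "{0, max 0 (Inf I), max 0 (Sup I)}"
  have I: "is_interval I" "I \<subseteq> {0..}"
    using Until.prems by auto
  have IH: "frontier {t. sat B x \<phi> t} \<subseteq> critical_times B x \<phi>"
    "frontier {t. sat B x \<psi> t} \<subseteq> critical_times B x \<psi>"
    using Until.IH Until.prems by simp_all
  have sat_Until: "{t. sat B x (Until \<phi> I \<psi>) t} = until_set {t. sat B x \<phi> t} I {t. sat B x \<psi> t}"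
    by (simp add: until_set_def)
  show ?case
  proof (cases "I = {}")
    case True
    then show ?thesis
      by (simp add: sat_Until until_set_def)
  next
    case False
    have "0 \<le> Inf I"
      using False I(2) by (intro cInf_greatest) auto
    then have Inf: "Inf I \<in> ?C"
      by simp
    have Sup: "Sup I \<in> ?C" if "bdd_above I"
    proof -
      obtain s where "s \<in> I"
        using False by blast
      then have "0 \<le> Sup I"
        using subsetD[OF I(2)] cSup_upper[OF _ that] by fastforce
      then show ?thesis
        by simp
    qed
    have "frontier (until_set {t. sat B x \<phi> t} I {t. sat B x \<psi> t})
        \<subseteq> {t. \<exists>c\<in>?C. t + c \<in> frontier {t. sat B x \<phi> t} \<union> frontier {t. sat B x \<psi> t}}"
      by (rule frontier_until_set_subset[OF I _ _ Inf Sup]) simp_all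
    also have "\<dots> \<subseteq> critical_times B x (Until \<phi> I \<psi>)"
    proof
      fix t assume "t \<in> {t. \<exists>c\<in>?C. t + c \<in> frontier {t. sat B x \<phi> t} \<union> frontier {t. sat B x \<psi> t}}"
      then obtain c where "c \<in> ?C" "t + c \<in> critical_times B x \<phi> \<union> critical_times B x \<psi>"
        using IH by blast
      then show "t \<in> critical_times B x (Until \<phi> I \<psi>)"
        by (rule critical_times_Until)
    qed
    finally show ?thesis
      by (simp only: sat_Until)
  qed
qed

lemma sat_cong_nonneg:
  "wf_mtl \<phi> \<Longrightarrow> 0 \<le> t \<Longrightarrow> (\<And>s. 0 \<le> s \<Longrightarrow> x s = y s) \<Longrightarrow> sat B x \<phi> t = sat B y \<phi> t"
proof (induction \<phi> arbitrary: t)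
  case (Until \<phi> I \<psi>)
  have "sat B x \<psi> (t + s) = sat B y \<psi> (t + s)" if "s \<in> I" for s
    using Until.IH(2)[of "t + s"] Until.prems that by auto
  moreover have "sat B x \<phi> (t + s) = sat B y \<phi> (t + s)" if "0 \<le> s" for s
    using Until.IH(1)[of "t + s"] Until.prems that by auto
  ultimately show ?case
    by auto
qed auto

section \<open>Processes with continuous paths\<close>

lemma tendsto_ceiling_grid:
  "(\<lambda>n. real_of_int \<lceil>real (Suc n) * t\<rceil> / real (Suc n)) \<longlonglongrightarrow> t"
proof (rule tendsto_sandwich[of "\<lambda>n. t" _ _ "\<lambda>n. t + inverse (real (Suc n))"])
  show "\<forall>\<^sub>F n in sequentially. t \<le> real_of_int \<lceil>real (Suc n) * t\<rceil> / real (Suc n)"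
    by (simp add: le_divide_eq mult.commute)
  show "\<forall>\<^sub>F n in sequentially. real_of_int \<lceil>real (Suc n) * t\<rceil> / real (Suc n) \<le> t + inverse (real (Suc n))"
  proof (rule always_eventually, rule allI)
    fix n
    have "real_of_int \<lceil>real (Suc n) * t\<rceil> / real (Suc n) \<le> (real (Suc n) * t + 1) / real (Suc n)"
      by (rule divide_right_mono) simp_all
    also have "\<dots> = t + inverse (real (Suc n))"
      by (simp add: field_simps)
    finally show "real_of_int \<lceil>real (Suc n) * t\<rceil> / real (Suc n) \<le> t + inverse (real (Suc n))" .
  qed
  show "(\<lambda>n. t + inverse (real (Suc n))) \<longlonglongrightarrow> t"
    using tendsto_add[OF tendsto_const LIMSEQ_inverse_real_of_nat, of t] by simp
qed simp

lemma borel_measurable_continuous_paths: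
  fixes X :: "real \<Rightarrow> 'w \<Rightarrow> 'b::metric_space"
  assumes meas: "\<And>t. X t \<in> borel_measurable M"
    and cont: "\<And>\<omega>. \<omega> \<in> space M \<Longrightarrow> continuous_on UNIV (\<lambda>t. X t \<omega>)"
  shows "(\<lambda>p. X (snd p) (fst p)) \<in> borel_measurable (M \<Otimes>\<^sub>M borel)"
proof (rule borel_measurable_LIMSEQ_metric)
  \<comment> \<open>Sampling the path on the grid of mesh \<open>1 / Suc n\<close> gives a countable case distinction.\<close>
  fix n
  show "(\<lambda>p. X (real_of_int \<lceil>real (Suc n) * snd p\<rceil> / real (Suc n)) (fst p))
      \<in> borel_measurable (M \<Otimes>\<^sub>M (borel :: real measure))"
  proof (rule measurable_compose_countable[where f="\<lambda>k p. X (real_of_int k / real (Suc n)) (fst p)"])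
    show "(\<lambda>p. X (real_of_int k / real (Suc n)) (fst p)) \<in> borel_measurable (M \<Otimes>\<^sub>M borel)" for k
      using meas by measurable
    show "(\<lambda>p :: 'w \<times> real. \<lceil>real (Suc n) * snd p\<rceil>) \<in> measurable (M \<Otimes>\<^sub>M borel) (count_space UNIV)"
      by measurable
  qed
next
  fix p :: "'w \<times> real" assume "p \<in> space (M \<Otimes>\<^sub>M borel)"
  then have "continuous_on UNIV (\<lambda>t. X t (fst p))"
    by (intro cont) (auto simp: space_pair_measure)
  then show "(\<lambda>n. X (real_of_int \<lceil>real (Suc n) * snd p\<rceil> / real (Suc n)) (fst p)) \<longlonglongrightarrow> X (snd p) (fst p)"
    using continuous_on_tendsto_compose[OF _ tendsto_ceiling_grid] by fastforce
qed

lemma sets_pair_restrict_space: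
  assumes "K \<in> sets (M \<Otimes>\<^sub>M N)" and "K \<subseteq> space M \<times> \<Omega>"
  shows "K \<in> sets (M \<Otimes>\<^sub>M restrict_space N \<Omega>)"
proof -
  have "(\<lambda>x. x) \<in> measurable (restrict_space N \<Omega>) N"
    by (rule measurable_restrict_space1[OF measurable_id])
  then have "snd \<in> measurable (M \<Otimes>\<^sub>M restrict_space N \<Omega>) N"
    using measurable_compose[OF measurable_snd] by blast
  then have "(\<lambda>p. p) \<in> measurable (M \<Otimes>\<^sub>M restrict_space N \<Omega>) (M \<Otimes>\<^sub>M N)"
    by (simp add: measurable_pair_iff comp_def)
  from measurable_sets[OF this assms(1)]
  have "K \<inter> space (M \<Otimes>\<^sub>M restrict_space N \<Omega>) \<in> sets (M \<Otimes>\<^sub>M restrict_space N \<Omega>)"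
    by simp
  moreover have "K \<inter> space (M \<Otimes>\<^sub>M restrict_space N \<Omega>) = K"
    using assms(2) sets.sets_into_space[OF assms(1)]
    by (auto simp: space_pair_measure space_restrict_space)
  ultimately show ?thesis
    by simp
qed

lemma distributed_vimage_null_sets:
  assumes "distributed M N X f" and "A \<in> null_sets N"
  shows "X -` A \<inter> space M \<in> null_sets M"
proof -
  have "A \<in> null_sets (distr M N X)"
    using assms absolutely_continuousI_density[of f N]
    by (auto simp: distributed_def absolutely_continuous_def)
  then show ?thesis
    using null_sets_distr_iff[OF distributed_measurable[OF assms(1)]] by blast
qed

lemma AE_sections_null_sets:
  assumes "sigma_finite_measure M" "sigma_finite_measure N"
    and K: "K \<in> sets (M \<Otimes>\<^sub>M N)"
    and null: "AE t in N. {\<omega> \<in> space M. (\<omega>, t) \<in> K} \<in> null_sets M"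
  shows "AE \<omega> in M. Pair \<omega> -` K \<in> null_sets N"
proof -
  interpret pair_sigma_finite M N
    using assms(1,2) by (rule pair_sigma_finite.intro)
  have "{p \<in> space (M \<Otimes>\<^sub>M N). (fst p, snd p) \<notin> K} \<in> sets (M \<Otimes>\<^sub>M N)"
    using K by auto
  moreover have "AE t in N. AE \<omega> in M. (\<omega>, t) \<notin> K"
    using null by eventually_elim (auto dest: AE_not_in)
  ultimately have "AE \<omega> in M. AE t in N. (\<omega>, t) \<notin> K"
    by (subst AE_commute)
  then show ?thesis
  proof eventually_elim
    case (elim \<omega>)
    then show ?case
      using sets_Pair1[OF K] by (simp add: AE_iff_null_sets vimage_def)
  qed
qed

lemma continuous_extension_of_paths:
  fixes X :: "real \<Rightarrow> 'w \<Rightarrow> real"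
  assumes "complete_measure M"
    and meas: "\<And>t. 0 \<le> t \<Longrightarrow> X t \<in> borel_measurable M"
    and "AE \<omega> in M. continuous_on {0..} (\<lambda>t. X t \<omega>)"
  obtains N x where "N \<in> null_sets M"
    and "(\<lambda>p. x (fst p) (snd p)) \<in> borel_measurable (M \<Otimes>\<^sub>M borel)"
    and "\<And>\<omega>. continuous_on UNIV (x \<omega>)"
    and "\<And>\<omega> s. \<omega> \<in> space M - N \<Longrightarrow> 0 \<le> s \<Longrightarrow> x \<omega> s = X s \<omega>"
proof -
  define N where "N = {\<omega> \<in> space M. \<not> continuous_on {0..} (\<lambda>t. X t \<omega>)}"
  obtain N' where "N \<subseteq> N'" "N' \<in> null_sets M"
    using assms(3) unfolding N_def by (auto elim!: AE_E intro: null_setsI)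
  then have N: "N \<in> null_sets M"
    using complete_measure.complete2[OF assms(1)] by blast
  define x where "x \<omega> s = (if \<omega> \<in> space M - N then X (max 0 s) \<omega> else 0)" for \<omega> s
  have "(\<lambda>\<omega>. x \<omega> t) \<in> borel_measurable M" for t
    unfolding x_def using N meas[of "max 0 t"] by (intro measurable_If_set) auto
  moreover have x_cont: "continuous_on UNIV (x \<omega>)" for \<omega>
  proof (cases "\<omega> \<in> space M - N")
    case True
    then have "continuous_on {0..} (\<lambda>t. X t \<omega>)"
      by (simp add: N_def)
    then show ?thesis
      using True unfolding x_def
      by (auto intro!: continuous_on_compose2[of "{0..}" "\<lambda>t. X t \<omega>"] continuous_intros)
  next
    case False
    then have "x \<omega> = (\<lambda>s. 0)"
      by (auto simp: x_def)
    then show ?thesis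
      by simp
  qed
  ultimately have "(\<lambda>p. x (fst p) (snd p)) \<in> borel_measurable (M \<Otimes>\<^sub>M borel)"
    by (rule borel_measurable_continuous_paths)
  moreover have "x \<omega> s = X s \<omega>" if "\<omega> \<in> space M - N" "0 \<le> s" for \<omega> s
    using that by (simp add: x_def)
  ultimately show ?thesis
    using that N x_cont by blast
qed

definition exceptional_set ::
    "'w measure \<Rightarrow> 'w set \<Rightarrow> ('w \<Rightarrow> real \<Rightarrow> real) \<Rightarrow> ('a \<Rightarrow> real set) \<Rightarrow> 'a mtl \<Rightarrow> ('w \<times> real) set" where
  "exceptional_set M N x B \<phi> =
    {(\<omega>, t). \<omega> \<in> space M \<and> 0 \<le> t \<and> (\<omega> \<in> N \<or> t \<in> critical_times B (x \<omega>) \<phi>)}"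

lemma sets_exceptional_set:
  assumes "N \<in> sets M" and x: "(\<lambda>p. x (fst p) (snd p)) \<in> borel_measurable (M \<Otimes>\<^sub>M borel)"
  shows "exceptional_set M N x B \<phi> \<in> sets (M \<Otimes>\<^sub>M borel)"
proof -
  have [measurable]: "(\<lambda>p. x (fst p) (snd p + c)) \<in> borel_measurable (M \<Otimes>\<^sub>M borel)" for c
    using measurable_compose[OF _ x, of "\<lambda>p. (fst p, snd p + c)"] by simp
  have [measurable]: "N \<in> sets M" "finite (atom_shifts \<phi>)" "frontier S \<in> sets borel" for S :: "real set"
    using assms(1) finite_atom_shifts by auto
  have "exceptional_set M N x B \<phi> = {p \<in> space (M \<Otimes>\<^sub>M borel). 0 \<le> snd p \<and>
      (fst p \<in> N \<or> (\<exists>q\<in>atom_shifts \<phi>. x (fst p) (snd p + snd q) \<in> frontier (B (fst q))))}"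
    by (auto simp: exceptional_set_def critical_times_def space_pair_measure case_prod_beta)
      (metis fst_conv snd_conv)+
  also have "\<dots> \<in> sets (M \<Otimes>\<^sub>M borel)"
    by measurable
  finally show ?thesis .
qed

lemma closed_exceptional_set_section:
  assumes "continuous_on UNIV (x \<omega>)"
  shows "closed {t. (\<omega>, t) \<in> exceptional_set M N x B \<phi>}"
proof -
  have "{t. (\<omega>, t) \<in> exceptional_set M N x B \<phi>} =
      (if \<omega> \<notin> space M then {} else if \<omega> \<in> N then {0..} else {0..} \<inter> critical_times B (x \<omega>) \<phi>)"
    by (auto simp: exceptional_set_def)
  then show ?thesis
    using closed_critical_times[OF assms] by (auto intro!: closed_Int)
qed

lemma exceptional_set_time_section_null:
  assumes "complete_measure M" and N: "N \<in> null_sets M"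
    and x: "\<And>\<omega> s. \<omega> \<in> space M - N \<Longrightarrow> 0 \<le> s \<Longrightarrow> x \<omega> s = X s \<omega>"
    and X: "\<And>s a. 0 < s \<Longrightarrow> {\<omega> \<in> space M. X s \<omega> \<in> frontier (B a)} \<in> null_sets M"
    and "t \<noteq> 0"
  shows "{\<omega> \<in> space M. (\<omega>, t) \<in> exceptional_set M N x B \<phi>} \<in> null_sets M"
proof (cases "0 < t")
  case False
  with \<open>t \<noteq> 0\<close> have "{\<omega> \<in> space M. (\<omega>, t) \<in> exceptional_set M N x B \<phi>} = {}"
    by (auto simp: exceptional_set_def)
  then show ?thesis
    by (simp only:) simp
next
  case True
  have "{\<omega> \<in> space M. (\<omega>, t) \<in> exceptional_set M N x B \<phi>}
      \<subseteq> N \<union> (\<Union>q\<in>atom_shifts \<phi>. {\<omega> \<in> space M. X (t + snd q) \<omega> \<in> frontier (B (fst q))})"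
    using x True atom_shifts_nonneg
    by (fastforce simp: exceptional_set_def critical_times_def)
  moreover have "(\<Union>q\<in>atom_shifts \<phi>. {\<omega> \<in> space M. X (t + snd q) \<omega> \<in> frontier (B (fst q))}) \<in> null_sets M"
    using True atom_shifts_nonneg finite_atom_shifts
    by (intro null_sets_UN' X countable_finite) (force intro: add_pos_nonneg)+
  ultimately show ?thesis
    using N complete_measure.complete2[OF assms(1)] by blast
qed

lemma frontier_sem_subset_exceptional_set_section:
  assumes "\<omega> \<in> space M" and x_cont: "continuous_on UNIV (x \<omega>)"
    and x: "\<And>s. \<omega> \<in> space M - N \<Longrightarrow> 0 \<le> s \<Longrightarrow> x \<omega> s = X s \<omega>"
    and "wf_mtl \<phi>"
  shows "top_of_set {0..} frontier_of sem B X \<phi> \<omega> \<subseteq> {t. (\<omega>, t) \<in> exceptional_set M N x B \<phi>}"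
proof (cases "\<omega> \<in> N")
  case True
  then show ?thesis
    using assms(1) frontier_of_subset_topspace[of "top_of_set {0..}"]
    by (auto simp: exceptional_set_def)
next
  case False
  have "sem B X \<phi> \<omega> = {0..} \<inter> {t. sat B (x \<omega>) \<phi> t}"
    using sat_cong_nonneg[OF \<open>wf_mtl \<phi>\<close>, of _ "\<lambda>s. X s \<omega>" "x \<omega>" B] x assms(1) False
    by (auto simp: sem_def)
  then have "top_of_set {0..} frontier_of sem B X \<phi> \<omega> = top_of_set {0..} frontier_of {t. sat B (x \<omega>) \<phi> t}"
    by (metis frontier_of_restrict topspace_euclidean_subtopology)
  also have "\<dots> \<subseteq> {0..} \<inter> frontier {t. sat B (x \<omega>) \<phi> t}"
    using frontier_of_subtopology_subset[of "{0..}" euclidean] frontier_of_subset_topspace[of "top_of_set {0..}"]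
    by auto
  also have "\<dots> \<subseteq> {t. (\<omega>, t) \<in> exceptional_set M N x B \<phi>}"
    using frontier_sat_subset_critical_times[OF x_cont \<open>wf_mtl \<phi>\<close>] assms(1)
    by (auto simp: exceptional_set_def)
  finally show ?thesis .
qed

theorem lemma6p14:
  fixes M :: "'w measure" and X :: "real \<Rightarrow> 'w \<Rightarrow> real"
    and B :: "'a \<Rightarrow> real set" and \<phi> :: "'a mtl"
  assumes "prob_space M" and "complete_measure M"
    and "\<And>t. t \<ge> 0 \<Longrightarrow> X t \<in> borel_measurable M"
    and "AE \<omega> in M. continuous_on {0..} (\<lambda>t. X t \<omega>)"
    and "\<And>t. t > 0 \<Longrightarrow> \<exists>f. distributed M lborel (X t) f"
    and "\<And>a. B a \<in> sets borel"
    and "\<And>a. frontier (B a) \<in> null_sets lborel"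
    and "wf_mtl \<phi>"
  shows "\<exists>K. K \<in> sets (M \<Otimes>\<^sub>M restrict_space borel {0..}) \<and>
    (AE \<omega> in M. closed {t. (\<omega>, t) \<in> K}) \<and>
    (AE \<omega> in M. {t. (\<omega>, t) \<in> K} \<in> null_sets lborel) \<and>
    (\<forall>t>0. measure M {\<omega> \<in> space M. (\<omega>, t) \<in> K} = 0) \<and>
    (\<forall>\<omega>\<in>space M. (top_of_set {0..}) frontier_of (sem B X \<phi> \<omega>) \<subseteq> {t. (\<omega>, t) \<in> K})"
proof -
  interpret prob_space M by fact
  obtain N x where N: "N \<in> null_sets M"
    and x_meas: "(\<lambda>p. x (fst p) (snd p)) \<in> borel_measurable (M \<Otimes>\<^sub>M borel)"
    and x_cont: "\<And>\<omega>. continuous_on UNIV (x \<omega>)"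
    and x_eq: "\<And>\<omega> s. \<omega> \<in> space M - N \<Longrightarrow> 0 \<le> s \<Longrightarrow> x \<omega> s = X s \<omega>"
    using continuous_extension_of_paths[OF assms(2,3,4)] by metis
  have X_null: "{\<omega> \<in> space M. X s \<omega> \<in> frontier (B a)} \<in> null_sets M" if "0 < s" for s a
    using assms(5)[OF that] distributed_vimage_null_sets[OF _ assms(7)]
    by (auto simp: vimage_def Int_def conj_commute)
  define K where "K = exceptional_set M N x B \<phi>"
  have K: "K \<in> sets (M \<Otimes>\<^sub>M borel)"
    unfolding K_def using N x_meas by (intro sets_exceptional_set) auto
  have K_time: "{\<omega> \<in> space M. (\<omega>, t) \<in> K} \<in> null_sets M" if "t \<noteq> 0" for t
    unfolding K_def using assms(2) N x_eq X_null that by (rule exceptional_set_time_section_null)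
  have "AE t in lborel. {\<omega> \<in> space M. (\<omega>, t) \<in> K} \<in> null_sets M"
    using AE_lborel_singleton[of 0] by eventually_elim (rule K_time)
  then have K_space: "AE \<omega> in M. {t. (\<omega>, t) \<in> K} \<in> null_sets lborel"
    using AE_sections_null_sets[OF sigma_finite_measure_axioms sigma_finite_lborel] K
    by (simp add: vimage_def sets_pair_measure_cong[OF refl sets_lborel])
  show ?thesis
  proof (intro exI[of _ K] conjI)
    show "K \<in> sets (M \<Otimes>\<^sub>M restrict_space borel {0..})"
      using K by (rule sets_pair_restrict_space) (auto simp: K_def exceptional_set_def)
    show "AE \<omega> in M. closed {t. (\<omega>, t) \<in> K}"
      unfolding K_def by (intro AE_I2 closed_exceptional_set_section x_cont)
    show "AE \<omega> in M. {t. (\<omega>, t) \<in> K} \<in> null_sets lborel"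
      by (fact K_space)
    show "\<forall>t>0. measure M {\<omega> \<in> space M. (\<omega>, t) \<in> K} = 0"
      using K_time by (simp add: measure_eq_0_null_sets)
    show "\<forall>\<omega>\<in>space M. top_of_set {0..} frontier_of sem B X \<phi> \<omega> \<subseteq> {t. (\<omega>, t) \<in> K}"
      unfolding K_def using x_eq
      by (intro ballI frontier_sem_subset_exceptional_set_section x_cont assms(8)) auto
  qed
qed

end
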